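(* Let $({\bm X},d_{\bm X})$ be a finite pseudometric space and let $\mathcal{M}({\bm X})$ be the collection of all Markov chains $({\bm X},m^{\bm X}_\bullet,\nu^{\bm X})$ with state space ${\bm X}$. For every $p\in\mathcal{P}(\mathbb{N})$, the map $(\mathcal{X}_1,\mathcal{X}_2)\mapsto d^{p}_{\mathrm{OTM}}(\mathcal{X}_1,\mathcal{X}_2;d_{\bm X})$ is a pseudometric on $\mathcal{M}({\bm X})$. If moreover $d_{\bm X}$ is a metric and $p(t)>0$ for all $t\in\mathbb{N}$, then it is a metric.
   Context: $\mathcal{C}(\alpha,\beta)$ denotes the set of couplings. For Markov chains $\mathcal{X}=({\bm X},m^{\bm X}_\bullet,\nu^{\bm X})$, $\mathcal{Y}=({\bm Y},m^{\bm Y}_\bullet,\nu^{\bm Y})$ on finite sets, a Markovian coupling is a (possibly time-inhomogeneous) Markov chain $(X_t,Y_t)_{t\in\mathbb{N}}$ on ${\bm X}\times{\bm Y}$ with $\mathrm{law}(X_0,Y_0)\in\mathcal{C}(\nu^{\bm X},\nu^{\bm Y})$ and, for all $t,x,y$, the conditional law of $(X_{t+1},Y_{t+1})$ given $(X_t,Y_t)=(x,y)$ in $\mathcal{C}(m^{\bm X}_x,m^{\bm Y}_y)$. For $p\in\mathcal{P}(\mathbb{N})$, $T\sim p$ and cost $C$, $d^{p}_{\mathrm{OTM}}(\mathcal{X},\mathcal{Y};C)=\inf\mathbb{E}\,C(X_T,Y_T)$ over Markovian couplings independent of $T$. *)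

theory Defs
  imports "HOL-Probability.Probability"
begin

type_synonym 'a mchain = "('a \<Rightarrow> 'a pmf) \<times> 'a pmf"

definition kernel :: "'a mchain \<Rightarrow> 'a \<Rightarrow> 'a pmf" where
  "kernel X = fst X"

definition init :: "'a mchain \<Rightarrow> 'a pmf" where
  "init X = snd X"

definition is_coupling :: "('a \<times> 'b) pmf \<Rightarrow> 'a pmf \<Rightarrow> 'b pmf \<Rightarrow> bool" where
  "is_coupling \<mu> \<alpha> \<beta> \<longleftrightarrow> map_pmf fst \<mu> = \<alpha> \<and> map_pmf snd \<mu> = \<beta>"

definition markovian_coupling ::
  "'a mchain \<Rightarrow> 'b mchain \<Rightarrow> ('a \<times> 'b) pmf \<Rightarrow> (nat \<Rightarrow> 'a \<times> 'b \<Rightarrow> ('a \<times> 'b) pmf) \<Rightarrow> bool" where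
  "markovian_coupling X Y \<mu>0 K \<longleftrightarrow>
     is_coupling \<mu>0 (init X) (init Y) \<and>
     (\<forall>t x y. is_coupling (K t (x, y)) (kernel X x) (kernel Y y))"

fun coupled_law :: "('a \<times> 'b) pmf \<Rightarrow> (nat \<Rightarrow> 'a \<times> 'b \<Rightarrow> ('a \<times> 'b) pmf) \<Rightarrow> nat \<Rightarrow> ('a \<times> 'b) pmf" where
  "coupled_law \<mu>0 K 0 = \<mu>0"
| "coupled_law \<mu>0 K (Suc t) = bind_pmf (coupled_law \<mu>0 K t) (K t)"

text \<open>E C(X_T, Y_T) with T ~ p independent of the coupled chain.\<close>
definition coupling_cost ::
  "nat pmf \<Rightarrow> ('a \<times> 'b) pmf \<Rightarrow> (nat \<Rightarrow> 'a \<times> 'b \<Rightarrow> ('a \<times> 'b) pmf) \<Rightarrow> ('a \<Rightarrow> 'b \<Rightarrow> real) \<Rightarrow> real" where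
  "coupling_cost p \<mu>0 K C =
     measure_pmf.expectation p (\<lambda>t. measure_pmf.expectation (coupled_law \<mu>0 K t) (\<lambda>(x, y). C x y))"

definition d_OTM :: "nat pmf \<Rightarrow> 'a mchain \<Rightarrow> 'b mchain \<Rightarrow> ('a \<Rightarrow> 'b \<Rightarrow> real) \<Rightarrow> real" where
  "d_OTM p X Y C =
     (INF (\<mu>0, K) \<in> {(\<mu>0, K). markovian_coupling X Y \<mu>0 K}. coupling_cost p \<mu>0 K C)"

text \<open>Law of the path (X_0, ..., X_n) of a Markov chain (finite-dimensional distributions).\<close>
fun path_law :: "'a mchain \<Rightarrow> nat \<Rightarrow> 'a list pmf" where
  "path_law X 0 = map_pmf (\<lambda>x. [x]) (init X)"
| "path_law X (Suc n) = bind_pmf (path_law X n) (\<lambda>xs. map_pmf (\<lambda>y. xs @ [y]) (kernel X (last xs)))"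

definition is_pseudometric :: "('a \<Rightarrow> 'a \<Rightarrow> real) \<Rightarrow> bool" where
  "is_pseudometric d \<longleftrightarrow>
     (\<forall>x. d x x = 0) \<and> (\<forall>x y. 0 \<le> d x y) \<and> (\<forall>x y. d x y = d y x) \<and>
     (\<forall>x y z. d x z \<le> d x y + d y z)"

definition is_metric :: "('a \<Rightarrow> 'a \<Rightarrow> real) \<Rightarrow> bool" where
  "is_metric d \<longleftrightarrow> is_pseudometric d \<and> (\<forall>x y. d x y = 0 \<longrightarrow> x = y)"

end

theory Submission
  imports Defs
begin

(* Nonnegativity, d(X, X) = 0 (run both copies together) and symmetry (swap the coordinates)
  are immediate. For the triangle inequality, couplings of (X, Y) and of (Y, Z) are glued along Y
  at every step, giving a Markov process on triples; its (x, z)-projection is not Markov, but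
  averaging the transitions over the fibres of the projection yields a Markovian coupling of
  (X, Z) with the same one-time laws, and the pointwise triangle inequality bounds its cost.

  If d is a metric, distinct states are at distance at least some delta > 0, so a coupling of
  cost c disagrees at time t with probability at most c / (p t * delta). Couplings of arbitrarily
  small cost therefore force equal initial laws and, since from the diagonal state (x, x) a
  disagreement is created with probability at least the difference of the two kernels at x,
  equal kernels at every reachable state. These determine the path laws. *)

lemma pmf_mult_le_expectation:
  fixes g :: "'a \<Rightarrow> real"
  assumes "integrable (measure_pmf M) g" "\<And>y. 0 \<le> g y"
  shows "pmf M x * g x \<le> measure_pmf.expectation M g"
proof -
  have "pmf M x * g x = measure_pmf.expectation M (\<lambda>y. g x * indicator {x} y)"
    by (simp add: measure_pmf_single)
  also have "\<dots> \<le> measure_pmf.expectation M g"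
    using assms by (intro integral_mono)
      (auto split: split_indicator intro!: integrable_real_indicator simp: measure_pmf.emeasure_eq_measure)
  finally show ?thesis .
qed

lemma abs_expectation_le_sum_abs:
  fixes f :: "'a::finite \<Rightarrow> real"
  shows "\<bar>measure_pmf.expectation M f\<bar> \<le> (\<Sum>a\<in>UNIV. \<bar>f a\<bar>)"
proof -
  have "\<bar>measure_pmf.expectation M f\<bar> = \<bar>\<Sum>a\<in>UNIV. f a * pmf M a\<bar>"
    by (subst integral_measure_pmf_real) auto
  also have "\<dots> \<le> (\<Sum>a\<in>UNIV. \<bar>f a\<bar>)"
    by (rule order_trans[OF sum_abs sum_mono]) (simp add: abs_mult mult_left_le pmf_le_1)
  finally show ?thesis .
qed

lemma integrable_expectation_finite:
  fixes f :: "'a::finite \<Rightarrow> real"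
  shows "integrable (measure_pmf p) (\<lambda>t. measure_pmf.expectation (M t) f)"
  by (rule measure_pmf.integrable_const_bound[where B="\<Sum>a\<in>UNIV. \<bar>f a\<bar>"])
     (auto simp: abs_expectation_le_sum_abs)

lemma prob_bind_pmf_ge:
  "pmf M x * measure_pmf.prob (K x) A \<le> measure_pmf.prob (bind_pmf M K) A"
proof -
  have "measure_pmf.prob (bind_pmf M K) A = measure_pmf.expectation M (\<lambda>y. measure_pmf.prob (K y) A)"
    unfolding measure_pmf_bind
    by (rule measure_pmf.measure_bind[where N="count_space UNIV"])
       (auto simp: space_subprob_algebra prob_space_imp_subprob_space prob_space_measure_pmf)
  moreover have "pmf M x * measure_pmf.prob (K x) A \<le> measure_pmf.expectation M (\<lambda>y. measure_pmf.prob (K y) A)"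
    by (rule pmf_mult_le_expectation) (auto intro!: measure_pmf.integrable_const_bound[where B=1])
  ultimately show ?thesis by simp
qed

fun state_law :: "'a mchain \<Rightarrow> nat \<Rightarrow> 'a pmf" where
  "state_law X 0 = init X"
| "state_law X (Suc n) = bind_pmf (state_law X n) (kernel X)"

lemma map_pmf_last_path_law: "map_pmf last (path_law X n) = state_law X n"
proof (induction n)
  case 0
  then show ?case by (simp add: pmf.map_comp o_def)
next
  case (Suc n)
  have "map_pmf last (path_law X (Suc n)) = bind_pmf (path_law X n) (\<lambda>xs. kernel X (last xs))"
    by (simp add: map_bind_pmf pmf.map_comp o_def)
  also have "\<dots> = bind_pmf (map_pmf last (path_law X n)) (kernel X)"
    by (simp add: bind_map_pmf o_def)
  finally show ?case using Suc by simp
qed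

lemma path_law_eqI:
  assumes "init X1 = init X2"
    and "\<And>m x. x \<in> set_pmf (state_law X1 m) \<Longrightarrow> kernel X1 x = kernel X2 x"
  shows "path_law X1 n = path_law X2 n"
proof (induction n)
  case 0
  then show ?case using assms(1) by simp
next
  case (Suc n)
  have "kernel X1 (last xs) = kernel X2 (last xs)" if "xs \<in> set_pmf (path_law X1 n)" for xs
  proof (rule assms(2))
    show "last xs \<in> set_pmf (state_law X1 n)"
      using that by (simp flip: map_pmf_last_path_law[of X1 n])
  qed
  then show ?case
    using Suc by (simp cong: bind_pmf_cong)
qed

lemma map_pmf_coupled_law:
  assumes "map_pmf f \<mu> = \<rho> 0"
    and "\<And>t. \<rho> (Suc t) = bind_pmf (\<rho> t) (M t)"
    and "\<And>t s. map_pmf f (K t s) = M t (f s)"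
  shows "map_pmf f (coupled_law \<mu> K t) = \<rho> t"
proof (induction t)
  case 0
  then show ?case using assms(1) by simp
next
  case (Suc t)
  have "map_pmf f (coupled_law \<mu> K (Suc t)) = bind_pmf (coupled_law \<mu> K t) (\<lambda>s. M t (f s))"
    by (simp add: map_bind_pmf assms(3))
  also have "\<dots> = \<rho> (Suc t)"
    by (simp add: bind_map_pmf[symmetric, unfolded o_def] Suc assms(2))
  finally show ?case .
qed

lemma map_fst_coupled_law:
  assumes "markovian_coupling X Y \<mu> K"
  shows "map_pmf fst (coupled_law \<mu> K t) = state_law X t"
  using assms by (intro map_pmf_coupled_law[where M="\<lambda>_. kernel X"])
    (auto simp: markovian_coupling_def is_coupling_def)

lemma is_coupling_bind_pmf:
  assumes "\<And>x. x \<in> set_pmf M \<Longrightarrow> is_coupling (N x) \<alpha> \<beta>"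
  shows "is_coupling (bind_pmf M N) \<alpha> \<beta>"
proof -
  have "map_pmf fst (bind_pmf M N) = bind_pmf M (\<lambda>_. \<alpha>)"
    unfolding map_bind_pmf using assms by (intro bind_pmf_cong) (auto simp: is_coupling_def)
  moreover have "map_pmf snd (bind_pmf M N) = bind_pmf M (\<lambda>_. \<beta>)"
    unfolding map_bind_pmf using assms by (intro bind_pmf_cong) (auto simp: is_coupling_def)
  ultimately show ?thesis by (simp add: is_coupling_def)
qed

definition glue_pmf :: "('a \<times> 'b) pmf \<Rightarrow> ('b \<times> 'c) pmf \<Rightarrow> ('a \<times> 'b \<times> 'c) pmf" where
  "glue_pmf \<alpha> \<beta> = bind_pmf \<alpha> (\<lambda>(a, b). map_pmf (\<lambda>q. (a, b, snd q)) (cond_pmf \<beta> {q. fst q = b}))"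

lemma map_glue_pmf_left: "map_pmf (\<lambda>(a, b, c). (a, b)) (glue_pmf \<alpha> \<beta>) = \<alpha>"
proof -
  have "map_pmf (\<lambda>(a, b, c). (a, b)) (glue_pmf \<alpha> \<beta>) = bind_pmf \<alpha> return_pmf"
    unfolding glue_pmf_def map_bind_pmf
    by (intro bind_pmf_cong) (auto simp: pmf.map_comp o_def map_pmf_const)
  then show ?thesis by (simp add: bind_return_pmf')
qed

lemma map_snd_glue_pmf:
  assumes "map_pmf snd \<alpha> = map_pmf fst \<beta>"
  shows "map_pmf snd (glue_pmf \<alpha> \<beta>) = \<beta>"
proof -
  have fibre_ne: "set_pmf \<beta> \<inter> {q. fst q = b} \<noteq> {}" if "b \<in> set_pmf (map_pmf fst \<beta>)" for b
    using that by auto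
  have "map_pmf snd (glue_pmf \<alpha> \<beta>) = bind_pmf \<alpha> (\<lambda>x. cond_pmf \<beta> {q. fst q = snd x})"
    unfolding glue_pmf_def map_bind_pmf
  proof (intro bind_pmf_cong refl)
    fix x assume x: "x \<in> set_pmf \<alpha>"
    obtain a b where x_eq: "x = (a, b)" by (cases x)
    have "b \<in> set_pmf (map_pmf fst \<beta>)"
      using x x_eq assms[symmetric] by (metis pmf.set_map imageI snd_conv)
    then have "map_pmf (\<lambda>q. (b, snd q)) (cond_pmf \<beta> {q. fst q = b}) = cond_pmf \<beta> {q. fst q = b}"
      by (subst map_pmf_cong[where g=id]) (auto simp: set_cond_pmf[OF fibre_ne])
    then show "map_pmf snd
        (case x of (a, b) \<Rightarrow> map_pmf (\<lambda>q. (a, b, snd q)) (cond_pmf \<beta> {q. fst q = b}))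
      = cond_pmf \<beta> {q. fst q = snd x}"
      by (simp add: x_eq pmf.map_comp o_def)
  qed
  also have "\<dots> = bind_pmf (map_pmf snd \<alpha>) (\<lambda>b. cond_pmf \<beta> {q. fst q = b})"
    by (simp add: bind_map_pmf o_def)
  also have "\<dots> = bind_pmf (map_pmf fst \<beta>) (\<lambda>b. cond_pmf \<beta> {q. fst q = b})"
    using assms by simp
  also have "\<dots> = \<beta>"
    using fibre_ne by (intro bind_cond_pmf_cancel) (auto simp: measure_map_pmf vimage_def eq_commute)
  finally show ?thesis .
qed

lemma is_coupling_glue_pmf:
  assumes "is_coupling \<alpha> a b" "is_coupling \<beta> b c"
  shows "is_coupling (map_pmf (\<lambda>(x, y, z). (x, z)) (glue_pmf \<alpha> \<beta>)) a c"
proof -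
  let ?\<gamma> = "glue_pmf \<alpha> \<beta>"
  have "map_pmf fst (map_pmf (\<lambda>(x, y, z). (x, z)) ?\<gamma>) = map_pmf fst (map_pmf (\<lambda>(x, y, z). (x, y)) ?\<gamma>)"
    by (simp add: pmf.map_comp o_def split_beta)
  also have "\<dots> = a"
    using assms(1) by (simp add: map_glue_pmf_left is_coupling_def)
  finally have fst_marginal: "map_pmf fst (map_pmf (\<lambda>(x, y, z). (x, z)) ?\<gamma>) = a" .
  have "map_pmf snd (map_pmf (\<lambda>(x, y, z). (x, z)) ?\<gamma>) = map_pmf snd (map_pmf snd ?\<gamma>)"
    by (simp add: pmf.map_comp o_def split_beta)
  also have "\<dots> = map_pmf snd \<beta>"
    using assms by (subst map_snd_glue_pmf) (auto simp: is_coupling_def)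
  also have "\<dots> = c"
    using assms(2) by (simp add: is_coupling_def)
  finally show ?thesis
    using fst_marginal by (simp add: is_coupling_def)
qed

lemma markovian_coupling_from_process:
  fixes \<rho> :: "nat \<Rightarrow> 's pmf" and f :: "'s \<Rightarrow> 'a \<times> 'b"
  assumes step: "\<And>t. \<rho> (Suc t) = bind_pmf (\<rho> t) (L t)"
    and init: "is_coupling (map_pmf f (\<rho> 0)) (init X) (init Y)"
    and trans: "\<And>t s. s \<in> set_pmf (\<rho> t) \<Longrightarrow>
      is_coupling (map_pmf f (L t s)) (kernel X (fst (f s))) (kernel Y (snd (f s)))"
  shows "\<exists>K. markovian_coupling X Y (map_pmf f (\<rho> 0)) K \<and>
    (\<forall>t. coupled_law (map_pmf f (\<rho> 0)) K t = map_pmf f (\<rho> t))"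
proof -
  \<comment> \<open>From a pair v reached at time t, move as the process does from a state of the fibre over v
    drawn according to its conditional law; off the support any coupling will do.\<close>
  define K where "K t v = (if v \<in> set_pmf (map_pmf f (\<rho> t))
      then bind_pmf (cond_pmf (\<rho> t) {s. f s = v}) (\<lambda>s. map_pmf f (L t s))
      else pair_pmf (kernel X (fst v)) (kernel Y (snd v)))" for t v
  have "is_coupling (K t v) (kernel X (fst v)) (kernel Y (snd v))" for t v
  proof (cases "v \<in> set_pmf (map_pmf f (\<rho> t))")
    case True
    then have fibre: "set_pmf (\<rho> t) \<inter> {s. f s = v} \<noteq> {}" by auto
    have "is_coupling (map_pmf f (L t s)) (kernel X (fst v)) (kernel Y (snd v))"
      if "s \<in> set_pmf (cond_pmf (\<rho> t) {s. f s = v})" for s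
      using that trans by (auto simp: set_cond_pmf[OF fibre])
    then show ?thesis
      using True by (simp add: K_def is_coupling_bind_pmf)
  next
    case False
    then show ?thesis by (simp add: K_def is_coupling_def map_fst_pair_pmf map_snd_pair_pmf)
  qed
  then have coupling: "markovian_coupling X Y (map_pmf f (\<rho> 0)) K"
    using init by (metis markovian_coupling_def fst_conv snd_conv)
  have "coupled_law (map_pmf f (\<rho> 0)) K t = map_pmf f (\<rho> t)" for t
  proof (induction t)
    case 0
    show ?case by simp
  next
    case (Suc t)
    have "coupled_law (map_pmf f (\<rho> 0)) K (Suc t) = bind_pmf (\<rho> t) (\<lambda>s. K t (f s))"
      using Suc by (simp add: bind_map_pmf o_def)
    also have "\<dots> = bind_pmf (\<rho> t)
        (\<lambda>s. bind_pmf (cond_pmf (\<rho> t) {s'. f s' = f s}) (\<lambda>s'. map_pmf f (L t s')))"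
      by (intro bind_pmf_cong refl) (simp add: K_def)
    also have "\<dots> = map_pmf f (bind_pmf (bind_pmf (\<rho> t) (\<lambda>s. cond_pmf (\<rho> t) {s'. f s' = f s})) (L t))"
      by (simp add: map_bind_pmf bind_assoc_pmf)
    also have "bind_pmf (\<rho> t) (\<lambda>s. cond_pmf (\<rho> t) {s'. f s' = f s}) = \<rho> t"
      by (rule bind_cond_pmf_cancel) (auto simp: eq_commute)
    finally show ?case using step by simp
  qed
  with coupling show ?thesis by blast
qed

lemma markovian_couplings_nonempty: "{(\<mu>, K). markovian_coupling X Y \<mu> K} \<noteq> {}"
proof -
  have "markovian_coupling X Y (pair_pmf (init X) (init Y))
      (\<lambda>t v. pair_pmf (kernel X (fst v)) (kernel Y (snd v)))"
    by (auto simp: markovian_coupling_def is_coupling_def map_fst_pair_pmf map_snd_pair_pmf)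
  then show ?thesis by blast
qed

lemma coupling_cost_nonneg:
  assumes "\<And>u v. 0 \<le> C u v"
  shows "0 \<le> coupling_cost p \<mu> K C"
  unfolding coupling_cost_def by (auto intro!: Bochner_Integration.integral_nonneg simp: assms)

lemma bdd_below_coupling_costs:
  assumes "\<And>u v. 0 \<le> C u v"
  shows "bdd_below ((\<lambda>(\<mu>, K). coupling_cost p \<mu> K C) ` {(\<mu>, K). markovian_coupling X Y \<mu> K})"
  by (rule bdd_belowI[where m=0]) (auto intro: coupling_cost_nonneg assms)

lemma d_OTM_le_coupling_cost:
  assumes "\<And>u v. 0 \<le> C u v" "markovian_coupling X Y \<mu> K"
  shows "d_OTM p X Y C \<le> coupling_cost p \<mu> K C"
proof -
  have "(\<mu>, K) \<in> {(\<mu>, K). markovian_coupling X Y \<mu> K}"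
    using assms(2) by simp
  from cINF_lower[OF bdd_below_coupling_costs[OF assms(1)] this] show ?thesis
    by (simp add: d_OTM_def)
qed

lemma d_OTM_greatest:
  assumes "\<And>\<mu> K. markovian_coupling X Y \<mu> K \<Longrightarrow> c \<le> coupling_cost p \<mu> K C"
  shows "c \<le> d_OTM p X Y C"
  unfolding d_OTM_def
  by (rule cINF_greatest[OF markovian_couplings_nonempty]) (auto intro: assms)

lemma d_OTM_nonneg:
  assumes "\<And>u v. 0 \<le> C u v"
  shows "0 \<le> d_OTM p X Y C"
  by (intro d_OTM_greatest coupling_cost_nonneg assms)

lemma d_OTM_less_imp_coupling:
  assumes "\<And>u v. 0 \<le> C u v" "d_OTM p X Y C < c"
  shows "\<exists>\<mu> K. markovian_coupling X Y \<mu> K \<and> coupling_cost p \<mu> K C < c"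
  using cINF_less_iff[OF markovian_couplings_nonempty
      bdd_below_coupling_costs[where C=C and p=p and X=X and Y=Y, OF assms(1)]] assms(2)
  by (auto simp: d_OTM_def)

lemma d_OTM_self:
  assumes "\<And>u. C u u = 0" "\<And>u v. 0 \<le> C u v"
  shows "d_OTM p X X C = 0"
proof -
  define \<mu> where "\<mu> = map_pmf (\<lambda>x. (x, x)) (init X)"
  define K where "K t v = (if fst v = snd v then map_pmf (\<lambda>x. (x, x)) (kernel X (fst v))
     else pair_pmf (kernel X (fst v)) (kernel X (snd v)))" for t :: nat and v
  have coupling: "markovian_coupling X X \<mu> K"
    by (auto simp: markovian_coupling_def is_coupling_def \<mu>_def K_def pmf.map_comp o_def
        map_fst_pair_pmf map_snd_pair_pmf)
  have diagonal: "set_pmf (coupled_law \<mu> K t) \<subseteq> {v. fst v = snd v}" for t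
    by (induction t) (auto simp: \<mu>_def K_def)
  have "measure_pmf.expectation (coupled_law \<mu> K t) (\<lambda>(x, y). C x y)
      = measure_pmf.expectation (coupled_law \<mu> K t) (\<lambda>_. 0)" for t
    using diagonal[of t] assms(1)
    by (intro integral_cong_AE) (auto simp: AE_measure_pmf_iff)
  then have "coupling_cost p \<mu> K C = 0"
    by (simp add: coupling_cost_def)
  then have "d_OTM p X X C \<le> 0"
    using d_OTM_le_coupling_cost[where C=C and p=p, OF assms(2) coupling] by simp
  then show ?thesis
    using d_OTM_nonneg[where C=C, OF assms(2)] by (simp add: order_antisym)
qed

lemma markovian_coupling_swap:
  assumes "markovian_coupling X Y \<mu> K"
  shows "markovian_coupling Y X (map_pmf prod.swap \<mu>) (\<lambda>t v. map_pmf prod.swap (K t (prod.swap v)))"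
  using assms by (auto simp: markovian_coupling_def is_coupling_def pmf.map_comp o_def)

lemma coupled_law_swap:
  "coupled_law (map_pmf prod.swap \<mu>) (\<lambda>t v. map_pmf prod.swap (K t (prod.swap v))) t
    = map_pmf prod.swap (coupled_law \<mu> K t)"
  by (rule map_pmf_coupled_law[where M="\<lambda>t v. map_pmf prod.swap (K t (prod.swap v))", symmetric])
    (auto simp: pmf.map_comp o_def)

lemma d_OTM_commute:
  assumes "\<And>u v. C u v = C v u" "\<And>u v. 0 \<le> C u v"
  shows "d_OTM p X Y C = d_OTM p Y X C"
proof -
  have "d_OTM p Y X C \<le> d_OTM p X Y C" for X Y
  proof (rule d_OTM_greatest)
    fix \<mu> K assume coupling: "markovian_coupling X Y \<mu> K"
    have "coupling_cost p (map_pmf prod.swap \<mu>) (\<lambda>t v. map_pmf prod.swap (K t (prod.swap v))) C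
        = coupling_cost p \<mu> K C"
      unfolding coupling_cost_def coupled_law_swap
      by (simp add: integral_map_pmf case_prod_beta split_beta' assms(1))
    then show "d_OTM p Y X C \<le> coupling_cost p \<mu> K C"
      using d_OTM_le_coupling_cost[where C=C and p=p, OF assms(2) markovian_coupling_swap[OF coupling]] by simp
  qed
  then show ?thesis
    by (simp add: order_antisym)
qed

definition glue_kernels ::
  "(nat \<Rightarrow> 'a \<times> 'b \<Rightarrow> ('a \<times> 'b) pmf) \<Rightarrow> (nat \<Rightarrow> 'b \<times> 'c \<Rightarrow> ('b \<times> 'c) pmf) \<Rightarrow>
    nat \<Rightarrow> 'a \<times> 'b \<times> 'c \<Rightarrow> ('a \<times> 'b \<times> 'c) pmf" where
  "glue_kernels K K' t = (\<lambda>(x, y, z). glue_pmf (K t (x, y)) (K' t (y, z)))"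

lemma map_glued_coupled_law_left:
  "map_pmf (\<lambda>(x, y, z). (x, y)) (coupled_law (glue_pmf \<mu> \<mu>') (glue_kernels K K') t) = coupled_law \<mu> K t"
  by (rule map_pmf_coupled_law[where M=K]) (auto simp: glue_kernels_def map_glue_pmf_left)

lemma map_snd_glued_coupled_law:
  assumes "markovian_coupling X Y \<mu> K" "markovian_coupling Y Z \<mu>' K'"
  shows "map_pmf snd (coupled_law (glue_pmf \<mu> \<mu>') (glue_kernels K K') t) = coupled_law \<mu>' K' t"
  using assms
  by (intro map_pmf_coupled_law[where M=K'])
    (auto simp: glue_kernels_def markovian_coupling_def is_coupling_def intro!: map_snd_glue_pmf)

lemma markovian_coupling_compose:
  assumes XY: "markovian_coupling X Y \<mu> K" and YZ: "markovian_coupling Y Z \<mu>' K'"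
  obtains \<mu>'' K'' where "markovian_coupling X Z \<mu>'' K''"
    "\<And>t. coupled_law \<mu>'' K'' t
      = map_pmf (\<lambda>(x, y, z). (x, z)) (coupled_law (glue_pmf \<mu> \<mu>') (glue_kernels K K') t)"
proof -
  define f :: "'a \<times> 'b \<times> 'c \<Rightarrow> 'a \<times> 'c" where "f = (\<lambda>(x, y, z). (x, z))"
  have "is_coupling (map_pmf f (glue_pmf \<mu> \<mu>')) (init X) (init Z)"
    using XY YZ by (auto simp: f_def markovian_coupling_def intro: is_coupling_glue_pmf)
  moreover have "is_coupling (map_pmf f (glue_kernels K K' t s)) (kernel X (fst (f s))) (kernel Z (snd (f s)))"
    for t s
  proof -
    obtain x y z where s: "s = (x, y, z)" by (cases s)
    have "is_coupling (K t (x, y)) (kernel X x) (kernel Y y)" "is_coupling (K' t (y, z)) (kernel Y y) (kernel Z z)"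
      using XY YZ by (simp_all add: markovian_coupling_def)
    then show ?thesis
      by (simp add: s f_def glue_kernels_def is_coupling_glue_pmf)
  qed
  ultimately show ?thesis
    using markovian_coupling_from_process[of "coupled_law (glue_pmf \<mu> \<mu>') (glue_kernels K K')"
        "glue_kernels K K'" f X Z] that
    by (auto simp: f_def)
qed

lemma coupling_cost_triangle:
  fixes d :: "'a::finite \<Rightarrow> 'a \<Rightarrow> real"
  assumes "is_pseudometric d"
    and XY: "markovian_coupling X Y \<mu> K" and YZ: "markovian_coupling Y Z \<mu>' K'"
  shows "\<exists>\<mu>'' K''. markovian_coupling X Z \<mu>'' K'' \<and>
    coupling_cost p \<mu>'' K'' d \<le> coupling_cost p \<mu> K d + coupling_cost p \<mu>' K' d"
proof -
  let ?\<rho> = "coupled_law (glue_pmf \<mu> \<mu>') (glue_kernels K K')"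
  let ?E = "\<lambda>\<mu> K t. measure_pmf.expectation (coupled_law \<mu> K t) (\<lambda>(x, y). d x y)"
  obtain \<mu>'' K'' where XZ: "markovian_coupling X Z \<mu>'' K''"
    and law: "\<And>t. coupled_law \<mu>'' K'' t = map_pmf (\<lambda>(x, y, z). (x, z)) (?\<rho> t)"
    using markovian_coupling_compose[OF XY YZ] by blast
  have "?E \<mu>'' K'' t \<le> ?E \<mu> K t + ?E \<mu>' K' t" for t
  proof -
    have "?E \<mu>'' K'' t = measure_pmf.expectation (?\<rho> t) (\<lambda>(x, y, z). d x z)"
      unfolding law by (simp add: integral_map_pmf case_prod_beta split_beta')
    also have "\<dots> \<le> measure_pmf.expectation (?\<rho> t) (\<lambda>(x, y, z). d x y + d y z)"
      using assms(1) by (intro integral_mono) (auto simp: is_pseudometric_def integrable_measure_pmf_finite)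
    also have "\<dots> = measure_pmf.expectation (?\<rho> t) (\<lambda>(x, y, z). d x y)
        + measure_pmf.expectation (?\<rho> t) (\<lambda>(x, y, z). d y z)"
      unfolding split_beta'
      by (rule Bochner_Integration.integral_add) (auto simp: integrable_measure_pmf_finite)
    also have "\<dots> = ?E \<mu> K t + ?E \<mu>' K' t"
      unfolding map_glued_coupled_law_left[of \<mu> \<mu>' K K' t, symmetric]
        map_snd_glued_coupled_law[OF XY YZ, of t, symmetric]
      by (simp add: integral_map_pmf case_prod_beta split_beta')
    finally show ?thesis .
  qed
  then have "coupling_cost p \<mu>'' K'' d \<le> measure_pmf.expectation p (\<lambda>t. ?E \<mu> K t + ?E \<mu>' K' t)"
    unfolding coupling_cost_def
    by (intro integral_mono) (auto intro!: Bochner_Integration.integrable_add integrable_expectation_finite)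
  also have "\<dots> = coupling_cost p \<mu> K d + coupling_cost p \<mu>' K' d"
    unfolding coupling_cost_def
    by (rule Bochner_Integration.integral_add) (auto intro!: integrable_expectation_finite)
  finally show ?thesis
    using XZ by blast
qed

lemma d_OTM_triangle:
  fixes d :: "'a::finite \<Rightarrow> 'a \<Rightarrow> real"
  assumes "is_pseudometric d"
  shows "d_OTM p X Z d \<le> d_OTM p X Y d + d_OTM p Y Z d"
proof -
  have nonneg: "\<And>u v. 0 \<le> d u v"
    using assms by (simp add: is_pseudometric_def)
  have "d_OTM p X Z d - d_OTM p Y Z d \<le> d_OTM p X Y d"
  proof (rule d_OTM_greatest)
    fix \<mu> K assume XY: "markovian_coupling X Y \<mu> K"
    have "d_OTM p X Z d - coupling_cost p \<mu> K d \<le> d_OTM p Y Z d"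
    proof (rule d_OTM_greatest)
      fix \<mu>' K' assume YZ: "markovian_coupling Y Z \<mu>' K'"
      obtain \<mu>'' K'' where XZ: "markovian_coupling X Z \<mu>'' K''"
        and "coupling_cost p \<mu>'' K'' d \<le> coupling_cost p \<mu> K d + coupling_cost p \<mu>' K' d"
        using coupling_cost_triangle[OF assms XY YZ] by blast
      with d_OTM_le_coupling_cost[where C=d and p=p, OF nonneg XZ]
      show "d_OTM p X Z d - coupling_cost p \<mu> K d \<le> coupling_cost p \<mu>' K' d" by linarith
    qed
    then show "d_OTM p X Z d - d_OTM p Y Z d \<le> coupling_cost p \<mu> K d" by linarith
  qed
  then show ?thesis by linarith
qed

definition mismatch_prob :: "('a \<times> 'a) pmf \<Rightarrow> real" where
  "mismatch_prob \<gamma> = measure_pmf.prob \<gamma> {v. fst v \<noteq> snd v}"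

lemma mismatch_prob_nonneg: "0 \<le> mismatch_prob \<gamma>"
  by (simp add: mismatch_prob_def)

lemma pmf_fst_le_pmf_diag_plus_mismatch_prob:
  "pmf (map_pmf fst \<gamma>) x \<le> pmf \<gamma> (x, x) + mismatch_prob \<gamma>"
proof -
  have "pmf (map_pmf fst \<gamma>) x = measure_pmf.prob \<gamma> {v. fst v = x}"
    by (simp add: pmf_map vimage_def)
  also have "\<dots> \<le> measure_pmf.prob \<gamma> ({(x, x)} \<union> {v. fst v \<noteq> snd v})"
    by (rule measure_pmf.finite_measure_mono) auto
  also have "\<dots> \<le> pmf \<gamma> (x, x) + mismatch_prob \<gamma>"
    unfolding mismatch_prob_def measure_pmf_single[symmetric] by (rule measure_Un_le) auto
  finally show ?thesis .
qed

lemma pmf_le_pmf_plus_mismatch_prob: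
  assumes "is_coupling \<gamma> \<alpha> \<beta>"
  shows "pmf \<alpha> z \<le> pmf \<beta> z + mismatch_prob \<gamma>"
proof -
  have "pmf \<alpha> z = measure_pmf.prob \<gamma> {v. fst v = z}"
    using assms by (auto simp: is_coupling_def pmf_map vimage_def)
  also have "\<dots> \<le> measure_pmf.prob \<gamma> ({v. snd v = z} \<union> {v. fst v \<noteq> snd v})"
    by (rule measure_pmf.finite_measure_mono) auto
  also have "\<dots> \<le> measure_pmf.prob \<gamma> {v. snd v = z} + mismatch_prob \<gamma>"
    unfolding mismatch_prob_def by (rule measure_Un_le) auto
  also have "measure_pmf.prob \<gamma> {v. snd v = z} = pmf \<beta> z"
    using assms by (auto simp: is_coupling_def pmf_map vimage_def)
  finally show ?thesis .
qed

lemma abs_pmf_diff_le_mismatch_prob: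
  assumes "is_coupling \<gamma> \<alpha> \<beta>"
  shows "\<bar>pmf \<alpha> z - pmf \<beta> z\<bar> \<le> mismatch_prob \<gamma>"
proof -
  have "is_coupling (map_pmf prod.swap \<gamma>) \<beta> \<alpha>"
    using assms by (simp add: is_coupling_def pmf.map_comp o_def)
  moreover have "mismatch_prob (map_pmf prod.swap \<gamma>) = mismatch_prob \<gamma>"
    by (auto simp: mismatch_prob_def measure_map_pmf vimage_def intro: arg_cong[where f="measure_pmf.prob \<gamma>"])
  ultimately show ?thesis
    using pmf_le_pmf_plus_mismatch_prob[OF assms, of z] pmf_le_pmf_plus_mismatch_prob[of _ \<beta> \<alpha> z]
    by fastforce
qed

lemma kernel_diff_le_mismatch_prob:
  assumes "markovian_coupling X Y \<mu> K"
  shows "pmf (state_law X m) x * \<bar>pmf (kernel X x) w - pmf (kernel Y x) w\<bar>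
    \<le> mismatch_prob (coupled_law \<mu> K m) + mismatch_prob (coupled_law \<mu> K (Suc m))"
proof -
  let ?\<gamma> = "coupled_law \<mu> K m"
  let ?D = "\<bar>pmf (kernel X x) w - pmf (kernel Y x) w\<bar>"
  have "?D \<le> mismatch_prob (K m (x, x))"
    using assms by (auto intro!: abs_pmf_diff_le_mismatch_prob simp: markovian_coupling_def)
  moreover have "pmf ?\<gamma> (x, x) * mismatch_prob (K m (x, x)) \<le> mismatch_prob (coupled_law \<mu> K (Suc m))"
    using prob_bind_pmf_ge[of ?\<gamma> "(x, x)" "K m"] by (simp add: mismatch_prob_def)
  ultimately have diag: "pmf ?\<gamma> (x, x) * ?D \<le> mismatch_prob (coupled_law \<mu> K (Suc m))"
    by (meson mult_left_mono order_trans pmf_nonneg)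
  have "?D \<le> 1"
    using pmf_le_1[of "kernel X x" w] pmf_le_1[of "kernel Y x" w]
      pmf_nonneg[of "kernel X x" w] pmf_nonneg[of "kernel Y x" w] by arith
  then have off_diag: "mismatch_prob ?\<gamma> * ?D \<le> mismatch_prob ?\<gamma>"
    by (simp add: mismatch_prob_nonneg mult_left_le)
  have "pmf (state_law X m) x \<le> pmf ?\<gamma> (x, x) + mismatch_prob ?\<gamma>"
    using pmf_fst_le_pmf_diag_plus_mismatch_prob[of ?\<gamma> x] map_fst_coupled_law[OF assms] by simp
  then have "pmf (state_law X m) x * ?D \<le> (pmf ?\<gamma> (x, x) + mismatch_prob ?\<gamma>) * ?D"
    by (simp add: mult_right_mono)
  with diag off_diag show ?thesis
    by (simp add: distrib_right)
qed

lemma mismatch_prob_le_coupling_cost: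
  fixes d :: "'a::finite \<Rightarrow> 'a \<Rightarrow> real"
  assumes "\<And>u v. u \<noteq> v \<Longrightarrow> \<delta> \<le> d u v" "\<And>u v. 0 \<le> d u v"
  shows "pmf p t * \<delta> * mismatch_prob (coupled_law \<mu> K t) \<le> coupling_cost p \<mu> K d"
proof -
  let ?E = "\<lambda>t. measure_pmf.expectation (coupled_law \<mu> K t) (\<lambda>(x, y). d x y)"
  have "\<delta> * mismatch_prob (coupled_law \<mu> K t)
      = measure_pmf.expectation (coupled_law \<mu> K t) (\<lambda>v. \<delta> * indicator {v. fst v \<noteq> snd v} v)"
    by (simp add: mismatch_prob_def)
  also have "\<dots> \<le> ?E t"
    using assms by (intro integral_mono) (auto intro!: integrable_measure_pmf_finite split: split_indicator)
  finally have "pmf p t * (\<delta> * mismatch_prob (coupled_law \<mu> K t)) \<le> pmf p t * ?E t"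
    by (simp add: mult_left_mono)
  also have "\<dots> \<le> coupling_cost p \<mu> K d"
    unfolding coupling_cost_def using assms(2)
    by (intro pmf_mult_le_expectation integrable_expectation_finite)
      (auto intro!: Bochner_Integration.integral_nonneg)
  finally show ?thesis by (simp add: mult.assoc)
qed

lemma metric_separated_finite:
  fixes d :: "'a::finite \<Rightarrow> 'a \<Rightarrow> real"
  assumes "is_metric d"
  obtains \<delta> where "\<delta> > 0" "\<And>u v. u \<noteq> v \<Longrightarrow> \<delta> \<le> d u v"
proof -
  define D where "D = insert 1 ((\<lambda>(u, v). d u v) ` {(u, v). u \<noteq> v})"
  have "finite D" "\<forall>e\<in>D. e > 0"
    using assms by (fastforce simp: D_def is_metric_def is_pseudometric_def order_le_less)+
  then have "Min D > 0"
    by (simp add: D_def)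
  moreover have "Min D \<le> d u v" if "u \<noteq> v" for u v
    using \<open>finite D\<close> that by (intro Min_le) (auto simp: D_def)
  ultimately show ?thesis using that by blast
qed

lemma d_OTM_eq_0_imp_mismatch_prob_le:
  fixes d :: "'a::finite \<Rightarrow> 'a \<Rightarrow> real"
  assumes "is_metric d" "\<forall>t. pmf p t > 0" "d_OTM p X Y d = 0" "\<epsilon> > 0"
  obtains \<mu> K where "markovian_coupling X Y \<mu> K"
    "\<And>t. t \<le> n \<Longrightarrow> mismatch_prob (coupled_law \<mu> K t) \<le> \<epsilon>"
proof -
  obtain \<delta> where \<delta>: "\<delta> > 0" "\<And>u v. u \<noteq> v \<Longrightarrow> \<delta> \<le> d u v"
    using metric_separated_finite[OF assms(1)] by blast
  have nonneg: "\<And>u v. 0 \<le> d u v"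
    using assms(1) by (simp add: is_metric_def is_pseudometric_def)
  define q where "q = Min (pmf p ` {..n})"
  have "q > 0"
    using assms(2) by (simp add: q_def)
  then have "d_OTM p X Y d < \<epsilon> * \<delta> * q"
    using assms(3,4) \<delta>(1) by simp
  then obtain \<mu> K where coupling: "markovian_coupling X Y \<mu> K"
    and cost: "coupling_cost p \<mu> K d < \<epsilon> * \<delta> * q"
    using d_OTM_less_imp_coupling[where C=d, OF nonneg] by blast
  have "mismatch_prob (coupled_law \<mu> K t) \<le> \<epsilon>" if "t \<le> n" for t
  proof -
    have "pmf p t * \<delta> * mismatch_prob (coupled_law \<mu> K t) < \<epsilon> * \<delta> * q"
      using mismatch_prob_le_coupling_cost[where d=d, OF \<delta>(2) nonneg] cost by (rule le_less_trans)
    also have "\<dots> \<le> \<epsilon> * \<delta> * pmf p t"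
      using that assms(4) \<delta>(1) by (intro mult_left_mono) (auto simp: q_def)
    finally show ?thesis
      using assms(2) \<delta>(1) by (simp add: mult.commute mult.left_commute)
  qed
  with coupling that show ?thesis by blast
qed

lemma path_law_eq_if_d_OTM_eq_0:
  fixes d :: "'a::finite \<Rightarrow> 'a \<Rightarrow> real"
  assumes "is_metric d" "\<forall>t. pmf p t > 0" "d_OTM p X Y d = 0"
  shows "path_law X n = path_law Y n"
proof (rule path_law_eqI)
  show "init X = init Y"
  proof (rule pmf_eqI)
    fix w
    have "\<bar>pmf (init X) w - pmf (init Y) w\<bar> \<le> 0 + \<epsilon>" if "\<epsilon> > 0" for \<epsilon>
    proof -
      obtain \<mu> K where "markovian_coupling X Y \<mu> K" "mismatch_prob (coupled_law \<mu> K 0) \<le> \<epsilon>"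
        using d_OTM_eq_0_imp_mismatch_prob_le[OF assms \<open>\<epsilon> > 0\<close>, of 0] by blast
      then show ?thesis
        using abs_pmf_diff_le_mismatch_prob[of \<mu> "init X" "init Y" w]
        by (simp add: markovian_coupling_def)
    qed
    then show "pmf (init X) w = pmf (init Y) w"
      using field_le_epsilon[of "\<bar>pmf (init X) w - pmf (init Y) w\<bar>" 0] by simp
  qed
next
  fix m x assume "x \<in> set_pmf (state_law X m)"
  then have reachable: "pmf (state_law X m) x > 0"
    by (simp add: pmf_positive)
  show "kernel X x = kernel Y x"
  proof (rule pmf_eqI)
    fix w
    let ?D = "\<bar>pmf (kernel X x) w - pmf (kernel Y x) w\<bar>"
    have "pmf (state_law X m) x * ?D \<le> 0 + \<epsilon>" if "\<epsilon> > 0" for \<epsilon>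
    proof -
      obtain \<mu> K where coupling: "markovian_coupling X Y \<mu> K"
        and small: "\<And>t. t \<le> Suc m \<Longrightarrow> mismatch_prob (coupled_law \<mu> K t) \<le> \<epsilon> / 2"
        using d_OTM_eq_0_imp_mismatch_prob_le[OF assms half_gt_zero[OF \<open>\<epsilon> > 0\<close>], of "Suc m"] by blast
      show ?thesis
        using kernel_diff_le_mismatch_prob[OF coupling, of m x w] small[of m] small[of "Suc m"] by simp
    qed
    then have "pmf (state_law X m) x * ?D \<le> 0"
      by (rule field_le_epsilon)
    then show "pmf (kernel X x) w = pmf (kernel Y x) w"
      using reachable by (simp add: mult_le_0_iff)
  qed
qed

theorem proposition34:
  fixes dX :: "'a::finite \<Rightarrow> 'a \<Rightarrow> real" and p :: "nat pmf"
  assumes "is_pseudometric dX"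
  shows "is_pseudometric (\<lambda>X1 X2 :: 'a mchain. d_OTM p X1 X2 dX) \<and>
         ((is_metric dX \<and> (\<forall>t. pmf p t > 0)) \<longrightarrow>
           (\<forall>X1 X2 :: 'a mchain. d_OTM p X1 X2 dX = 0 \<longrightarrow> (\<forall>n. path_law X1 n = path_law X2 n)))"
proof -
  have self: "\<And>u. dX u u = 0" and nonneg: "\<And>u v. 0 \<le> dX u v" and sym: "\<And>u v. dX u v = dX v u"
    using assms by (auto simp: is_pseudometric_def)
  have "is_pseudometric (\<lambda>X1 X2 :: 'a mchain. d_OTM p X1 X2 dX)"
    unfolding is_pseudometric_def
    using d_OTM_self[where C=dX, OF self nonneg] d_OTM_nonneg[where C=dX, OF nonneg]
      d_OTM_commute[where C=dX, OF sym nonneg]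
      d_OTM_triangle[OF assms]
    by blast
  moreover have "is_metric dX \<and> (\<forall>t. pmf p t > 0) \<Longrightarrow> d_OTM p X1 X2 dX = 0 \<Longrightarrow>
      path_law X1 n = path_law X2 n" for X1 X2 :: "'a mchain" and n
    using path_law_eq_if_d_OTM_eq_0 by blast
  ultimately show ?thesis by blast
qed

end
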